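(* Let $\rho\colon\mathrm{Isom}(\mathbf H^1_{\mathbb C})_o\to\mathrm{Isom}(\mathbf H^\infty_{\mathbb C})_o$ be irreducible, with $\eta_1,\eta_2,E,K,c$ as in the context. Then the isometry $\rho(\sigma)$ can be represented, with respect to $\mathbb C\eta_1\oplus\mathbb C\eta_2\oplus E$, by $$\begin{pmatrix}0&\nu^{-1}&0\\ \nu&0&0\\0&0&A\end{pmatrix}$$ for some $\nu>0$ and some unitary map $A$ of $E$ satisfying $A\,c(b)=\nu K(b)\,c(-1/b)$ for every $b\in\mathbb R\setminus\{0\}$.
   Context: $\mathcal H$: separable complex Hilbert space with strongly non-degenerate Hermitian form $B$ (linear in the first variable) of signature $(1,\infty)$; $\mathbf H^\infty_{\mathbb C}=\{[v]:B(v,v)>0\}$, $\cosh d([v],[w])=|B(v,w)|/\sqrt{B(v,v)B(w,w)}$, boundary = isotropic lines, $\mathrm{Isom}(\mathbf H^\infty_{\mathbb C})_o=PU(B)$. $\mathbf H^1_{\mathbb C}$: $\mathbb C^2$ with $B(z,w)=z_1\bar w_1-z_2\bar w_2$, $\xi_1=(e_1+e_2)/\sqrt2$, $\xi_2=(e_1-e_2)/\sqrt2$; $g(\lambda,b)\in SU(1,1)$ has matrix $\begin{pmatrix}\lambda&ib\\0&\lambda^{-1}\end{pmatrix}$ in basis $(\xi_1,\xi_2)$; $\sigma$ is the isometry induced by $s=\begin{pmatrix}0&i\\i&0\end{pmatrix}$ in that basis. Representations are orbitally continuous; irreducible = no fixed point in $\mathbf H^\infty_{\mathbb C}\cup\partial\mathbf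 H^\infty_{\mathbb C}$, no invariant pair of boundary points, no proper invariant complex hyperbolic subspace. For such $\rho$: $\eta_1\in\partial\mathbf H^\infty_{\mathbb C}$ is the unique common fixed point of all $\rho(g(\lambda,b))$, $\eta_2$ the other endpoint of the common axis of the $\rho(g(\lambda,0))$, $\lambda\ne1$; isotropic representatives satisfy $B(\eta_1,\eta_2)=1$; $E=\eta_1^\perp\cap\eta_2^\perp$. For $b\in\mathbb R$, the lift $T_b\in U(B)$ of $\rho(g(1,b))$ with $T_b\eta_1=\eta_1$ satisfies $T_b\eta_2=K(b)\eta_1+\eta_2+c(b)$ with $K(b)\in\mathbb C$, $c(b)\in E$. *)

theory Defs
  imports "HOL-Analysis.Analysis"
begin

text \<open>Up to isomorphism, H = C (+) l2(N): vectors are square-summable sequences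
  v : nat => complex; coordinate 0 is the positive direction, coordinates
  Suc n the negative directions.  B is linear in the first variable.\<close>

type_synonym vec = "nat \<Rightarrow> complex"

definition Hsp :: "vec set" where
  "Hsp = {v. summable (\<lambda>n. (cmod (v n))\<^sup>2)}"

definition Bf :: "vec \<Rightarrow> vec \<Rightarrow> complex" where
  "Bf v w = v 0 * cnj (w 0) - (\<Sum>n. v (Suc n) * cnj (w (Suc n)))"

definition vzero :: vec where "vzero = (\<lambda>_. 0)"
definition vadd :: "vec \<Rightarrow> vec \<Rightarrow> vec" where "vadd v w = (\<lambda>n. v n + w n)"
definition vsc :: "complex \<Rightarrow> vec \<Rightarrow> vec" where "vsc a v = (\<lambda>n. a * v n)"

definition l2norm :: "vec \<Rightarrow> real" where
  "l2norm v = sqrt (\<Sum>n. (cmod (v n))\<^sup>2)"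

definition clinear_on :: "vec set \<Rightarrow> (vec \<Rightarrow> vec) \<Rightarrow> bool" where
  "clinear_on S T \<longleftrightarrow>
     (\<forall>v\<in>S. \<forall>w\<in>S. T (vadd v w) = vadd (T v) (T w)) \<and>
     (\<forall>a. \<forall>v\<in>S. T (vsc a v) = vsc a (T v))"

definition UB :: "(vec \<Rightarrow> vec) set" where
  "UB = {T. T ` Hsp = Hsp \<and> inj_on T Hsp \<and> clinear_on Hsp T \<and>
            (\<forall>v\<in>Hsp. \<forall>w\<in>Hsp. Bf (T v) (T w) = Bf v w)}"

text \<open>Two elements of U(B) define the same element of PU(B).\<close>
definition proj_eq :: "(vec \<Rightarrow> vec) \<Rightarrow> (vec \<Rightarrow> vec) \<Rightarrow> bool" where
  "proj_eq S T \<longleftrightarrow> (\<exists>u. cmod u = 1 \<and> (\<forall>v\<in>Hsp. S v = vsc u (T v)))"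

text \<open>The (projective) point [v] is fixed by (the isometry induced by) T.\<close>
definition fixes_line :: "(vec \<Rightarrow> vec) \<Rightarrow> vec \<Rightarrow> bool" where
  "fixes_line T v \<longleftrightarrow> (\<exists>a. T v = vsc a v)"

definition same_line :: "vec \<Rightarrow> vec \<Rightarrow> bool" where
  "same_line v w \<longleftrightarrow> (\<exists>a. v = vsc a w)"

text \<open>Nonzero vectors with B(v,v) > 0 represent points of the complex hyperbolic space;
  nonzero isotropic vectors represent boundary points.\<close>
definition pos_vec :: "vec \<Rightarrow> bool" where
  "pos_vec v \<longleftrightarrow> v \<in> Hsp \<and> Re (Bf v v) > 0"

definition isotropic :: "vec \<Rightarrow> bool" where
  "isotropic v \<longleftrightarrow> v \<in> Hsp \<and> v \<noteq> vzero \<and> Bf v v = 0"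

definition hdist :: "vec \<Rightarrow> vec \<Rightarrow> real" where
  "hdist v w = arcosh (cmod (Bf v w) / sqrt (Re (Bf v v) * Re (Bf w w)))"

text \<open>Closed complex linear subspaces of H, and complex hyperbolic subspaces
  (projectivised positive part of a closed complex subspace meeting the positive cone).\<close>
definition csubspace :: "vec set \<Rightarrow> bool" where
  "csubspace W \<longleftrightarrow> W \<subseteq> Hsp \<and> vzero \<in> W \<and>
     (\<forall>v\<in>W. \<forall>w\<in>W. vadd v w \<in> W) \<and> (\<forall>a. \<forall>v\<in>W. vsc a v \<in> W)"

definition closed_in_H :: "vec set \<Rightarrow> bool" where
  "closed_in_H W \<longleftrightarrow> (\<forall>X v. (\<forall>k. X k \<in> W) \<and> v \<in> Hsp \<and>
       (\<lambda>k. l2norm (\<lambda>n. X k n - v n)) \<longlonglongrightarrow> 0 \<longrightarrow> v \<in> W)"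

definition hyp_subspace :: "vec set \<Rightarrow> bool" where
  "hyp_subspace W \<longleftrightarrow> csubspace W \<and> closed_in_H W \<and> (\<exists>v\<in>W. pos_vec v)"

definition Eperp :: "vec \<Rightarrow> vec \<Rightarrow> vec set" where
  "Eperp e1 e2 = {v \<in> Hsp. Bf v e1 = 0 \<and> Bf v e2 = 0}"

definition B2 :: "complex^2 \<Rightarrow> complex^2 \<Rightarrow> complex" where
  "B2 z w = z$1 * cnj (w$1) - z$2 * cnj (w$2)"

definition SU11 :: "(complex^2^2) set" where
  "SU11 = {M. det M = 1 \<and> (\<forall>z w. B2 (M *v z) (M *v w) = B2 z w)}"

text \<open>xi1 = (e1+e2)/sqrt 2, xi2 = (e1-e2)/sqrt 2; Pxi has columns xi1, xi2
  (it is its own inverse), so the matrix in the standard basis of a map whose matrix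
  in the basis (xi1, xi2) is G is Pxi ** G ** Pxi.\<close>
definition xi1 :: "complex^2" where
  "xi1 = vector [complex_of_real (1 / sqrt 2), complex_of_real (1 / sqrt 2)]"
definition xi2 :: "complex^2" where
  "xi2 = vector [complex_of_real (1 / sqrt 2), - complex_of_real (1 / sqrt 2)]"

definition Pxi :: "complex^2^2" where
  "Pxi = (\<chi> i j. if j = 1 then xi1 $ i else xi2 $ i)"

definition gmat :: "real \<Rightarrow> real \<Rightarrow> complex^2^2" where
  "gmat l b = Pxi ** (vector [vector [complex_of_real l, \<i> * complex_of_real b],
                               vector [0, complex_of_real (1 / l)]] :: complex^2^2) ** Pxi"

definition smat :: "complex^2^2" where
  "smat = Pxi ** (vector [vector [0, \<i>], vector [\<i>, 0]] :: complex^2^2) ** Pxi"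

text \<open>A representation of Isom(H^1_C)_o = PU(1,1) = SU(1,1)/{+-1} into PU(B) is
  encoded by choosing, for each M in SU(1,1), a lift rho M in U(B); the lifts are
  multiplicative up to unimodular scalars and -M has the same image as M.\<close>
definition is_rep :: "(complex^2^2 \<Rightarrow> vec \<Rightarrow> vec) \<Rightarrow> bool" where
  "is_rep \<rho> \<longleftrightarrow>
     (\<forall>M\<in>SU11. \<rho> M \<in> UB) \<and>
     (\<forall>M\<in>SU11. \<forall>N\<in>SU11. proj_eq (\<rho> (M ** N)) (\<rho> M \<circ> \<rho> N)) \<and>
     (\<forall>M\<in>SU11. proj_eq (\<rho> (- M)) (\<rho> M))"

definition orbitally_continuous :: "(complex^2^2 \<Rightarrow> vec \<Rightarrow> vec) \<Rightarrow> bool" where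
  "orbitally_continuous \<rho> \<longleftrightarrow>
     (\<forall>v. pos_vec v \<longrightarrow> (\<forall>M0\<in>SU11. \<forall>\<epsilon>>0. \<exists>\<delta>>0. \<forall>M\<in>SU11.
         dist M M0 < \<delta> \<longrightarrow> hdist (\<rho> M v) (\<rho> M0 v) < \<epsilon>))"

definition irreducible_rep :: "(complex^2^2 \<Rightarrow> vec \<Rightarrow> vec) \<Rightarrow> bool" where
  "irreducible_rep \<rho> \<longleftrightarrow>
     \<comment> \<open>no fixed point in H^infty_C \<union> its boundary\<close>
     \<not> (\<exists>v. v \<in> Hsp \<and> v \<noteq> vzero \<and> Re (Bf v v) \<ge> 0 \<and> (\<forall>M\<in>SU11. fixes_line (\<rho> M) v)) \<and>
     \<comment> \<open>no invariant pair of boundary points\<close>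
     \<not> (\<exists>v w. isotropic v \<and> isotropic w \<and> \<not> same_line v w \<and>
          (\<forall>M\<in>SU11. (same_line (\<rho> M v) v \<and> same_line (\<rho> M w) w) \<or>
                     (same_line (\<rho> M v) w \<and> same_line (\<rho> M w) v))) \<and>
     \<comment> \<open>no proper invariant complex hyperbolic subspace\<close>
     \<not> (\<exists>W. hyp_subspace W \<and> W \<noteq> Hsp \<and> (\<forall>M\<in>SU11. \<rho> M ` W \<subseteq> W))"

end

theory Submission
  imports Defs
begin

text \<open>
  Some diagonal element \<open>\<rho>(g(\<lambda>,0))\<close> acts loxodromically on the axis \<open>\<eta>1 \<eta>2\<close>. Otherwise
  all of them are elliptic, which makes \<open>K\<close> invariant under the dilations \<open>b \<mapsto> \<lambda>\<^sup>2 b\<close>;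
  since \<open>cosh d(\<rho>(g(1,b)) p, p) = |2 + K(b)|/2\<close> for \<open>p = \<eta>1 + \<eta>2\<close>, orbital continuity at
  \<open>b = 0\<close> then forces \<open>K = 0\<close> and \<open>c = 0\<close>, so the whole upper triangular group would fix
  \<open>\<eta>2\<close> as well, contradicting the uniqueness of \<open>\<eta>1\<close>.

  Since \<open>\<sigma>\<close> conjugates \<open>g(1/\<lambda>,0)\<close> into \<open>g(\<lambda>,0)\<close>, \<open>\<rho>(\<sigma>)\<close> permutes the fixed
  isotropic lines of this loxodromic element, which are only \<open>\<eta>1\<close> and \<open>\<eta>2\<close>. It cannot fix
  \<open>\<eta>1\<close>: by the Bruhat decomposition \<open>SU(1,1) = B \<union> B\<sigma>N\<close> the whole group would then fix
  \<open>\<eta>1\<close>. So \<open>\<rho>(\<sigma>)\<close> swaps the two lines, and after multiplying by a unimodular scalar it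
  acts by \<open>\<nu>\<close> and \<open>1/\<nu>\<close> on them and preserves \<open>E\<close>. Finally the relation
  \<open>\<sigma> g(1,b) \<sigma> = -g(1,-1/b) g(1/b,0) \<sigma> g(1,-1/b)\<close>, applied to \<open>\<eta>1\<close> and
  decomposed along \<open>\<complex>\<eta>1 \<oplus> \<complex>\<eta>2 \<oplus> E\<close>, gives \<open>A c(b) = \<nu> K(b) c(-1/b)\<close>.
\<close>

section \<open>\<open>SU(1,1)\<close> in the basis \<open>\<xi>1, \<xi>2\<close>\<close>

definition xi_conj :: "complex^2^2 \<Rightarrow> complex^2^2" where
  "xi_conj X = Pxi ** X ** Pxi"

definition gmat_xi :: "real \<Rightarrow> real \<Rightarrow> complex^2^2" where
  "gmat_xi l b = vector [vector [complex_of_real l, \<i> * complex_of_real b],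
                         vector [0, complex_of_real (1 / l)]]"

definition smat_xi :: "complex^2^2" where
  "smat_xi = vector [vector [0, \<i>], vector [\<i>, 0]]"

lemma gmat_eq_xi_conj: "gmat l b = xi_conj (gmat_xi l b)"
  unfolding gmat_def gmat_xi_def xi_conj_def ..

lemma smat_eq_xi_conj: "smat = xi_conj smat_xi"
  unfolding smat_def smat_xi_def xi_conj_def ..

text \<open>Hiding \<open>1 / sqrt 2\<close> behind an abstract \<open>s\<close> keeps the simplifier away from square roots.\<close>

lemma Pxi_explicit:
  obtains s :: complex
  where "Pxi = vector [vector [s, s], vector [s, - s]]" "\<And>z. s * (s * z) = z / 2" "cnj s = s"
proof (rule that)
  show "Pxi = vector [vector [complex_of_real (1 / sqrt 2), complex_of_real (1 / sqrt 2)],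
                      vector [complex_of_real (1 / sqrt 2), - complex_of_real (1 / sqrt 2)]]"
    unfolding Pxi_def xi1_def xi2_def by (simp add: vec_eq_iff forall_2)
  show "complex_of_real (1 / sqrt 2) * (complex_of_real (1 / sqrt 2) * z) = z / 2" for z
    by (simp flip: of_real_mult mult.assoc)
qed simp

lemma xi_conj_explicit:
  "xi_conj X = (vector [
     vector [(X$1$1 + X$1$2 + X$2$1 + X$2$2) / 2, (X$1$1 - X$1$2 + X$2$1 - X$2$2) / 2],
     vector [(X$1$1 + X$1$2 - X$2$1 - X$2$2) / 2, (X$1$1 - X$1$2 - X$2$1 + X$2$2) / 2]] :: complex^2^2)"
proof -
  obtain s where Pxi: "Pxi = vector [vector [s, s], vector [s, - s]]" and s: "\<And>z. s * (s * z) = z / 2"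
    using Pxi_explicit by metis
  show ?thesis unfolding xi_conj_def Pxi
    by (simp add: vec_eq_iff forall_2 matrix_matrix_mult_def sum_2 algebra_simps s
        add_divide_distrib diff_divide_distrib)
qed

lemma Pxi_involutive: "Pxi ** Pxi = mat 1"
  using xi_conj_explicit[of "mat 1"] unfolding xi_conj_def matrix_mul_rid
  by (simp add: vec_eq_iff forall_2 mat_def)

lemma xi_conj_mult: "xi_conj X ** xi_conj Y = xi_conj (X ** Y)"
  unfolding xi_conj_def by (metis Pxi_involutive matrix_mul_assoc matrix_mul_rid)

lemma xi_conj_involutive: "xi_conj (xi_conj X) = X"
  unfolding xi_conj_def by (metis Pxi_involutive matrix_mul_assoc matrix_mul_rid matrix_mul_lid)

lemma xi_conj_uminus: "xi_conj (- X) = - xi_conj X"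
  unfolding xi_conj_explicit by (simp add: vec_eq_iff forall_2 field_simps)

lemma xi_conj_mult_vec: "xi_conj X *v z = Pxi *v (X *v (Pxi *v z))"
  unfolding xi_conj_def by (simp add: matrix_vector_mul_assoc matrix_mul_assoc)

lemma Pxi_mult_vec_involutive: "Pxi *v (Pxi *v z) = z"
  by (metis Pxi_involutive matrix_vector_mul_assoc matrix_vector_mul_lid)

lemma det_xi_conj: "det (xi_conj X) = det X"
proof -
  have "det Pxi * det Pxi = 1" using Pxi_involutive by (metis det_I det_mul)
  thus ?thesis unfolding xi_conj_def det_mul by (simp add: algebra_simps)
qed

definition B2_xi :: "complex^2 \<Rightarrow> complex^2 \<Rightarrow> complex" where
  "B2_xi u v = u$1 * cnj (v$2) + u$2 * cnj (v$1)"

lemma B2_Pxi: "B2 (Pxi *v u) (Pxi *v v) = B2_xi u v"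
proof -
  obtain s where Pxi: "Pxi = vector [vector [s, s], vector [s, - s]]" and s: "\<And>z. s * (s * z) = z / 2"
    and "cnj s = s" using Pxi_explicit by metis
  show ?thesis unfolding Pxi B2_def B2_xi_def
    by (simp add: matrix_vector_mult_def sum_2 algebra_simps s \<open>cnj s = s\<close>)
qed

lemma xi_conj_in_SU11_iff:
  "xi_conj X \<in> SU11 \<longleftrightarrow> det X = 1 \<and> (\<forall>u v. B2_xi (X *v u) (X *v v) = B2_xi u v)"
proof -
  have "(\<forall>z w. B2 (xi_conj X *v z) (xi_conj X *v w) = B2 z w) \<longleftrightarrow>
        (\<forall>u v. B2_xi (X *v u) (X *v v) = B2_xi u v)"
    by (metis B2_Pxi Pxi_mult_vec_involutive xi_conj_mult_vec)
  thus ?thesis unfolding SU11_def by (simp add: det_xi_conj)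
qed

lemma gmat_in_SU11: "l \<noteq> 0 \<Longrightarrow> gmat l b \<in> SU11"
  unfolding gmat_eq_xi_conj xi_conj_in_SU11_iff
  by (simp add: det_2 gmat_xi_def B2_xi_def matrix_vector_mult_def sum_2 algebra_simps)

lemma gmat_unipotent_in_SU11: "gmat 1 b \<in> SU11"
  by (simp add: gmat_in_SU11)

lemma smat_in_SU11: "smat \<in> SU11"
  unfolding smat_eq_xi_conj xi_conj_in_SU11_iff
  by (simp add: det_2 smat_xi_def B2_xi_def matrix_vector_mult_def sum_2 algebra_simps)

lemma SU11_mult: "M \<in> SU11 \<Longrightarrow> N \<in> SU11 \<Longrightarrow> M ** N \<in> SU11"
  unfolding SU11_def by (simp add: det_mul matrix_vector_mul_assoc[symmetric])

lemma gmat_diag_unipotent_commute: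
  "l \<noteq> 0 \<Longrightarrow> gmat l 0 ** gmat 1 b = gmat 1 (l\<^sup>2 * b) ** gmat l 0"
  unfolding gmat_eq_xi_conj xi_conj_mult
  by (rule arg_cong[where f=xi_conj])
     (simp add: gmat_xi_def vec_eq_iff forall_2 matrix_matrix_mult_def sum_2 field_simps power2_eq_square)

lemma gmat_factor: "l \<noteq> 0 \<Longrightarrow> gmat l b = gmat 1 (b * l) ** gmat l 0"
  unfolding gmat_eq_xi_conj xi_conj_mult
  by (rule arg_cong[where f=xi_conj])
     (simp add: gmat_xi_def vec_eq_iff forall_2 matrix_matrix_mult_def sum_2 field_simps)

lemma smat_gmat_diag: "l \<noteq> 0 \<Longrightarrow> smat ** gmat (1 / l) 0 = gmat l 0 ** smat"
  unfolding gmat_eq_xi_conj smat_eq_xi_conj xi_conj_mult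
  by (rule arg_cong[where f=xi_conj])
     (simp add: gmat_xi_def smat_xi_def vec_eq_iff forall_2 matrix_matrix_mult_def sum_2 field_simps)

lemma smat_gmat_smat:
  "b \<noteq> 0 \<Longrightarrow>
   smat ** gmat 1 b ** smat = - (gmat 1 (-1/b) ** gmat (1/b) 0 ** smat ** gmat 1 (-1/b))"
  unfolding gmat_eq_xi_conj smat_eq_xi_conj xi_conj_mult xi_conj_uminus[symmetric]
  by (rule arg_cong[where f=xi_conj])
     (simp add: gmat_xi_def smat_xi_def vec_eq_iff forall_2 matrix_matrix_mult_def sum_2 field_simps)

text \<open>The hypotheses are the entries of \<open>X\<^sup>* J X = J\<close> and \<open>det X = 1\<close>, where
  \<open>J\<close> is the Gram matrix of \<open>B2_xi\<close>.\<close>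

lemma SU11_xi_entry_relations:
  fixes p q r t :: complex
  assumes "p * cnj r + r * cnj p = 0" "p * cnj t + r * cnj q = 1"
    and "q * cnj t + t * cnj q = 0" "p * t - q * r = 1"
  shows "cnj p = p" "cnj q = - q" "cnj r = - r" "cnj t = t"
proof -
  have "cnj p * t + cnj r * q = 1" using arg_cong[OF assms(2), of cnj] by simp
  then show "cnj p = p" "cnj q = - q" "cnj r = - r" "cnj t = t"
    using assms by algebra+
qed

lemma SU11_xi_entries:
  assumes "xi_conj X \<in> SU11"
  obtains P Q R T :: real
  where "X = vector [vector [complex_of_real P, \<i> * complex_of_real Q],
                     vector [\<i> * complex_of_real R, complex_of_real T]]"
    and "P * T + Q * R = 1"
proof -
  have det: "det X = 1" and B: "\<And>u v. B2_xi (X *v u) (X *v v) = B2_xi u v"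
    using assms unfolding xi_conj_in_SU11_iff by auto
  define p q r t where "p = X$1$1" "q = X$1$2" "r = X$2$1" "t = X$2$2"
  have X: "X = vector [vector [p, q], vector [r, t]]"
    unfolding p_q_r_t_def by (simp add: vec_eq_iff forall_2)
  have "p * cnj r + r * cnj p = 0" "p * cnj t + r * cnj q = 1" "q * cnj t + t * cnj q = 0"
    using B[of "vector [1, 0]" "vector [1, 0]"] B[of "vector [1, 0]" "vector [0, 1]"]
      B[of "vector [0, 1]" "vector [0, 1]"]
    unfolding X by (simp_all add: B2_xi_def matrix_vector_mult_def sum_2)
  moreover have pqrt: "p * t - q * r = 1" using det unfolding X det_2 by simp
  ultimately have "cnj p = p" "cnj q = - q" "cnj r = - r" "cnj t = t"
    by (rule SU11_xi_entry_relations)+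
  then have "Im p = 0" "Re q = 0" "Re r = 0" "Im t = 0"
    by (simp_all add: complex_eq_iff)
  then have e: "p = Re p" "q = \<i> * Im q" "r = \<i> * Im r" "t = Re t"
    and "Re p * Re t + Im q * Im r = Re (p * t - q * r)"
    by (simp_all add: complex_eq_iff)
  with X pqrt show ?thesis by (intro that) auto
qed

lemma SU11_bruhat:
  assumes "M \<in> SU11"
  shows "(\<exists>l b. l \<noteq> 0 \<and> M = gmat l b) \<or>
         (\<exists>l b1 b2. l \<noteq> 0 \<and> M = gmat l b1 ** smat ** gmat 1 b2)"
proof -
  have "xi_conj (xi_conj M) \<in> SU11" using assms by (simp add: xi_conj_involutive)
  then obtain P Q R T
    where X: "xi_conj M = vector [vector [complex_of_real P, \<i> * complex_of_real Q],
                                  vector [\<i> * complex_of_real R, complex_of_real T]]"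
      and det: "P * T + Q * R = 1"
    by (rule SU11_xi_entries)
  show ?thesis
  proof (cases "R = 0")
    case True
    with det have "P * T = 1" by simp
    then have "P \<noteq> 0" "T = 1 / P" by (auto simp: eq_divide_eq mult.commute)
    with True have "xi_conj M = gmat_xi P Q" unfolding X gmat_xi_def by (simp add: vec_eq_iff forall_2)
    then have "M = gmat P Q" by (metis gmat_eq_xi_conj xi_conj_involutive)
    with \<open>P \<noteq> 0\<close> show ?thesis by blast
  next
    case False
    have "complex_of_real P * complex_of_real T + complex_of_real Q * complex_of_real R = 1"
      using det by (metis of_real_1 of_real_add of_real_mult)
    then have "\<i> * (complex_of_real P * complex_of_real T) + \<i> * (complex_of_real Q * complex_of_real R) = \<i>"
      by (metis distrib_left mult_1_right)
    with False have "xi_conj M = gmat_xi (1 / R) (- P) ** smat_xi ** gmat_xi 1 (- T / R)"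
      unfolding X gmat_xi_def smat_xi_def
      by (simp add: vec_eq_iff forall_2 matrix_matrix_mult_def sum_2 field_simps)
    then have "M = gmat (1 / R) (- P) ** smat ** gmat 1 (- T / R)"
      by (metis gmat_eq_xi_conj smat_eq_xi_conj xi_conj_mult xi_conj_involutive)
    with False show ?thesis by (metis divide_eq_0_iff zero_neq_one)
  qed
qed

lemma gmat_unipotent_affine:
  "gmat 1 b = gmat 1 0 + b *\<^sub>R xi_conj (vector [vector [0, \<i>], vector [0, 0]])"
  unfolding gmat_eq_xi_conj xi_conj_explicit gmat_xi_def
  by (simp add: vec_eq_iff forall_2 field_simps complex_eq_iff)

lemma gmat_unipotent_tendsto: "((\<lambda>t. gmat 1 (t * b)) \<longlongrightarrow> gmat 1 0) (at_right 0)"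
proof -
  have "((\<lambda>t. gmat 1 0 + (t * b) *\<^sub>R xi_conj (vector [vector [0, \<i>], vector [0, 0]]))
          \<longlongrightarrow> gmat 1 0 + (0 * b) *\<^sub>R xi_conj (vector [vector [0, \<i>], vector [0, 0]])) (at_right 0)"
    by (intro tendsto_intros)
  then show ?thesis by (subst gmat_unipotent_affine) simp
qed

section \<open>The form \<open>B\<close> and the unitary group \<open>U(B)\<close>\<close>

lemma Hsp_add [simp, intro]:
  assumes "v \<in> Hsp" "w \<in> Hsp" shows "(\<lambda>n. v n + w n) \<in> Hsp"
proof -
  have "summable (\<lambda>n. 2 * (cmod (v n))\<^sup>2 + 2 * (cmod (w n))\<^sup>2)"
    using assms unfolding Hsp_def by (intro summable_add summable_mult) auto
  moreover have "norm ((cmod (v n + w n))\<^sup>2) \<le> 2 * (cmod (v n))\<^sup>2 + 2 * (cmod (w n))\<^sup>2" for n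
  proof -
    have "(cmod (v n + w n))\<^sup>2 \<le> (cmod (v n) + cmod (w n))\<^sup>2"
      by (simp add: norm_triangle_ineq power_mono)
    also have "\<dots> \<le> 2 * (cmod (v n))\<^sup>2 + 2 * (cmod (w n))\<^sup>2"
      using sum_squares_bound[of "cmod (v n)" "cmod (w n)"] by (simp add: power2_sum)
    finally show ?thesis by simp
  qed
  ultimately have "summable (\<lambda>n. (cmod (v n + w n))\<^sup>2)"
    by (rule summable_comparison_test'[where N=0])
  then show ?thesis unfolding Hsp_def by simp
qed

lemma Hsp_scale [simp, intro]: "v \<in> Hsp \<Longrightarrow> (\<lambda>n. a * v n) \<in> Hsp"
  unfolding Hsp_def by (simp add: norm_mult power_mult_distrib summable_mult)

lemma Hsp_zero [simp, intro]: "(\<lambda>n. 0) \<in> Hsp"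
  unfolding Hsp_def by simp

lemma Hsp_diff [simp, intro]:
  assumes "v \<in> Hsp" "w \<in> Hsp" shows "(\<lambda>n. v n - w n) \<in> Hsp"
  using Hsp_add[OF assms(1) Hsp_scale[OF assms(2), of "-1"]] by simp

lemma summable_Bf_tail:
  assumes "v \<in> Hsp" "w \<in> Hsp" shows "summable (\<lambda>n. v (Suc n) * cnj (w (Suc n)))"
proof -
  have "summable (\<lambda>n. (cmod (v n))\<^sup>2 + (cmod (w n))\<^sup>2)"
    using assms unfolding Hsp_def by (intro summable_add) auto
  moreover have "norm (norm (v n * cnj (w n))) \<le> (cmod (v n))\<^sup>2 + (cmod (w n))\<^sup>2" for n
  proof -
    have "norm (norm (v n * cnj (w n))) = cmod (v n) * cmod (w n)" by (simp add: norm_mult)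
    moreover have "0 \<le> cmod (v n) * cmod (w n)" by simp
    ultimately show ?thesis using sum_squares_bound[of "cmod (v n)" "cmod (w n)"] by linarith
  qed
  ultimately have "summable (\<lambda>n. norm (v n * cnj (w n)))"
    by (rule summable_comparison_test'[where N=0])
  then have "summable (\<lambda>n. v n * cnj (w n))"
    by (rule summable_norm_cancel)
  then show ?thesis by (subst summable_Suc_iff)
qed

lemma Bf_add_left [simp]:
  "v \<in> Hsp \<Longrightarrow> v' \<in> Hsp \<Longrightarrow> w \<in> Hsp \<Longrightarrow> Bf (\<lambda>n. v n + v' n) w = Bf v w + Bf v' w"
  unfolding Bf_def using summable_Bf_tail[of v w] summable_Bf_tail[of v' w]
  by (simp add: distrib_right suminf_add[symmetric] algebra_simps)

lemma Bf_scale_left [simp]: "v \<in> Hsp \<Longrightarrow> w \<in> Hsp \<Longrightarrow> Bf (\<lambda>n. a * v n) w = a * Bf v w"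
  unfolding Bf_def using summable_Bf_tail[of v w]
  by (simp add: suminf_mult[symmetric] algebra_simps)

lemma Bf_diff_left [simp]:
  assumes "v \<in> Hsp" "v' \<in> Hsp" "w \<in> Hsp" shows "Bf (\<lambda>n. v n - v' n) w = Bf v w - Bf v' w"
proof -
  have "Bf (\<lambda>n. v n + (-1) * v' n) w = Bf v w + (-1) * Bf v' w"
    by (simp only: Bf_add_left[OF assms(1) Hsp_scale[OF assms(2)] assms(3)] Bf_scale_left[OF assms(2,3)])
  then show ?thesis by simp
qed

lemma Bf_cnj:
  assumes "v \<in> Hsp" "w \<in> Hsp" shows "Bf w v = cnj (Bf v w)"
proof -
  have "(\<lambda>n. cnj (v (Suc n) * cnj (w (Suc n)))) sums cnj (\<Sum>n. v (Suc n) * cnj (w (Suc n)))"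
    using summable_Bf_tail[OF assms] by (intro sums_cnj[THEN iffD2] summable_sums)
  then have "(\<Sum>n. w (Suc n) * cnj (v (Suc n))) = cnj (\<Sum>n. v (Suc n) * cnj (w (Suc n)))"
    by (simp add: mult.commute sums_iff)
  then show ?thesis unfolding Bf_def by (simp add: mult.commute)
qed

lemma Bf_add_right [simp]:
  "v \<in> Hsp \<Longrightarrow> w \<in> Hsp \<Longrightarrow> w' \<in> Hsp \<Longrightarrow> Bf v (\<lambda>n. w n + w' n) = Bf v w + Bf v w'"
  by (simp add: Bf_cnj[of _ v])

lemma Bf_scale_right [simp]: "v \<in> Hsp \<Longrightarrow> w \<in> Hsp \<Longrightarrow> Bf v (\<lambda>n. a * w n) = cnj a * Bf v w"
  by (simp add: Bf_cnj[of _ v])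

lemma Bf_diff_right [simp]:
  "v \<in> Hsp \<Longrightarrow> w \<in> Hsp \<Longrightarrow> w' \<in> Hsp \<Longrightarrow> Bf v (\<lambda>n. w n - w' n) = Bf v w - Bf v w'"
  by (simp add: Bf_cnj[of _ v])

lemma Bf_self:
  assumes "v \<in> Hsp"
  shows "Bf v v = complex_of_real ((cmod (v 0))\<^sup>2 - (\<Sum>n. (cmod (v (Suc n)))\<^sup>2))"
proof -
  have norm_sq: "z * cnj z = complex_of_real ((cmod z)\<^sup>2)" for z
    by (rule complex_norm_square[symmetric])
  have "summable (\<lambda>n. (cmod (v (Suc n)))\<^sup>2)"
    using assms unfolding Hsp_def by (subst summable_Suc_iff) simp
  then have "(\<Sum>n. v (Suc n) * cnj (v (Suc n))) = complex_of_real (\<Sum>n. (cmod (v (Suc n)))\<^sup>2)"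
    unfolding norm_sq by (rule suminf_of_real[symmetric])
  then show ?thesis unfolding Bf_def by (simp add: norm_sq)
qed

lemma scale_cancel:
  assumes "v \<noteq> vzero" "(\<lambda>n. a * v n) = (\<lambda>n. b * v n)" shows "a = b"
proof -
  obtain n where "v n \<noteq> 0" using assms(1) unfolding vzero_def by auto
  moreover have "a * v n = b * v n" using assms(2) by meson
  ultimately show ?thesis by simp
qed

lemma Bf_self_first_zero:
  assumes "v \<in> Hsp" "v 0 = 0"
  shows "Re (Bf v v) \<le> 0" and "Bf v v = 0 \<Longrightarrow> v = vzero"
proof -
  have sum: "summable (\<lambda>n. (cmod (v (Suc n)))\<^sup>2)"
    using assms(1) unfolding Hsp_def by (subst summable_Suc_iff) simp
  have v: "Bf v v = - complex_of_real (\<Sum>n. (cmod (v (Suc n)))\<^sup>2)"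
    using Bf_self[OF assms(1)] assms(2) by simp
  show "Re (Bf v v) \<le> 0" unfolding v using suminf_nonneg[OF sum] by simp
  assume "Bf v v = 0"
  then have "\<forall>n. (cmod (v (Suc n)))\<^sup>2 = 0" using suminf_eq_zero_iff[OF sum] v by simp
  with assms(2) show "v = vzero" unfolding vzero_def
  proof (intro ext)
    show "v n = 0" if "\<forall>n. (cmod (v (Suc n)))\<^sup>2 = 0" "v 0 = 0" for n
      using that by (cases n) auto
  qed
qed

lemma Bf_orthogonal_to_positive:
  assumes e: "e \<in> Hsp" and p: "p \<in> Hsp" and ep: "Bf e p = 0" and pp: "Re (Bf p p) > 0"
  shows "Re (Bf e e) \<le> 0" and "Bf e e = 0 \<Longrightarrow> e = vzero"
proof -
  have p0: "p 0 \<noteq> 0" using Bf_self_first_zero(1)[OF p] pp by force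
  \<comment> \<open>\<open>w\<close> has no positive coordinate, and \<open>B(w,w) = |p\<^sub>0|\<^sup>2 B(e,e) + |e\<^sub>0|\<^sup>2 B(p,p)\<close>.\<close>
  define w where "w = (\<lambda>n. p 0 * e n - e 0 * p n)"
  have w: "w \<in> Hsp" "w 0 = 0" unfolding w_def using e p by simp_all
  have "Bf p e = 0" using Bf_cnj[OF e p] ep by simp
  then have ww: "Bf w w = p 0 * cnj (p 0) * Bf e e + e 0 * cnj (e 0) * Bf p p"
    unfolding w_def using e p ep by (simp; simp add: algebra_simps)
  have real: "Bf e e = Re (Bf e e)" "Bf p p = Re (Bf p p)"
    using Bf_self[OF e] Bf_self[OF p] by simp_all
  have Re_ww: "Re (Bf w w) = (cmod (p 0))\<^sup>2 * Re (Bf e e) + (cmod (e 0))\<^sup>2 * Re (Bf p p)"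
    unfolding ww by (subst real(1), subst real(2)) (simp flip: complex_norm_square of_real_mult)
  show "Re (Bf e e) \<le> 0"
  proof (rule ccontr)
    assume "\<not> Re (Bf e e) \<le> 0"
    then have "(cmod (p 0))\<^sup>2 * Re (Bf e e) > 0" using p0 by simp
    moreover have "(cmod (e 0))\<^sup>2 * Re (Bf p p) \<ge> 0" using pp by simp
    ultimately show False using Bf_self_first_zero(1)[OF w] Re_ww by linarith
  qed
  assume ee: "Bf e e = 0"
  then have "(cmod (e 0))\<^sup>2 * Re (Bf p p) \<le> 0" using Bf_self_first_zero(1)[OF w] Re_ww by simp
  then have e0: "e 0 = 0" using pp by (simp add: mult_le_0_iff)
  then have "w = vzero" using Bf_self_first_zero(2)[OF w] ww ee by simp
  then show "e = vzero" using p0 e0 unfolding w_def vzero_def by (simp add: fun_eq_iff)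
qed

lemma UB_Hsp: "T \<in> UB \<Longrightarrow> v \<in> Hsp \<Longrightarrow> T v \<in> Hsp"
  unfolding UB_def by blast

lemma UB_add:
  "T \<in> UB \<Longrightarrow> v \<in> Hsp \<Longrightarrow> w \<in> Hsp \<Longrightarrow> T (\<lambda>n. v n + w n) = (\<lambda>n. T v n + T w n)"
  unfolding UB_def clinear_on_def vadd_def by blast

lemma UB_scale: "T \<in> UB \<Longrightarrow> v \<in> Hsp \<Longrightarrow> T (\<lambda>n. a * v n) = (\<lambda>n. a * T v n)"
  unfolding UB_def clinear_on_def vsc_def by blast

lemma UB_Bf: "T \<in> UB \<Longrightarrow> v \<in> Hsp \<Longrightarrow> w \<in> Hsp \<Longrightarrow> Bf (T v) (T w) = Bf v w"
  unfolding UB_def by blast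

lemma UB_inj: "T \<in> UB \<Longrightarrow> v \<in> Hsp \<Longrightarrow> w \<in> Hsp \<Longrightarrow> T v = T w \<Longrightarrow> v = w"
  unfolding UB_def inj_on_def by blast

lemma UB_surj:
  assumes "T \<in> UB" "w \<in> Hsp" shows "\<exists>v\<in>Hsp. T v = w"
proof -
  have "w \<in> T ` Hsp" using assms unfolding UB_def by simp
  then show ?thesis by blast
qed

lemma UB_restrict:
  assumes "T \<in> UB" "W \<subseteq> Hsp"
  shows "inj_on T W" "clinear_on W T" "\<forall>v\<in>W. \<forall>w\<in>W. Bf (T v) (T w) = Bf v w"
  using assms unfolding UB_def clinear_on_def by (blast intro: inj_on_subset)+

lemma UB_nonzero:
  assumes "T \<in> UB" "v \<in> Hsp" "v \<noteq> vzero" shows "T v \<noteq> vzero"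
proof
  have "T (\<lambda>n. 0) = (\<lambda>n. 0)" using UB_scale[OF assms(1) Hsp_zero, of 0] by simp
  moreover assume "T v = vzero"
  ultimately show False using UB_inj[OF assms(1,2) Hsp_zero] assms(3) unfolding vzero_def by simp
qed

lemma unimodular_mult_cnj: "cmod u = 1 \<Longrightarrow> u * cnj u = 1"
  by (metis complex_norm_square of_real_1 power_one)

lemma proj_eq_refl: "proj_eq T T"
  unfolding proj_eq_def vsc_def by (rule exI[of _ 1]) simp

lemma proj_eq_sym:
  assumes "proj_eq S T" shows "proj_eq T S"
proof -
  obtain u where u: "cmod u = 1" "\<forall>v\<in>Hsp. S v = vsc u (T v)"
    using assms unfolding proj_eq_def by auto
  then have "\<forall>v\<in>Hsp. T v = vsc (cnj u) (S v)"
    using unimodular_mult_cnj[OF u(1)] unfolding vsc_def by (auto simp: algebra_simps)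
  with u(1) show ?thesis unfolding proj_eq_def by (intro exI[of _ "cnj u"]) simp
qed

lemma proj_eq_trans:
  assumes "proj_eq R S" "proj_eq S T" shows "proj_eq R T"
proof -
  obtain u u' where "cmod u = 1" "\<forall>v\<in>Hsp. R v = vsc u (S v)"
    and "cmod u' = 1" "\<forall>v\<in>Hsp. S v = vsc u' (T v)"
    using assms unfolding proj_eq_def by auto
  then show ?thesis unfolding proj_eq_def vsc_def
    by (intro exI[of _ "u * u'"]) (simp add: norm_mult mult.assoc)
qed

lemma proj_eqE:
  assumes "proj_eq S T"
  obtains u where "cmod u = 1" "\<And>v. v \<in> Hsp \<Longrightarrow> S v = (\<lambda>n. u * T v n)"
  using assms unfolding proj_eq_def vsc_def by auto

lemma proj_eq_UB:
  assumes "proj_eq T R" "R \<in> UB" shows "T \<in> UB"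
proof -
  obtain u where u: "cmod u = 1" and T: "\<And>v. v \<in> Hsp \<Longrightarrow> T v = (\<lambda>n. u * R v n)"
    using proj_eqE[OF assms(1)] by blast
  have uu: "u * cnj u = 1" "cnj u * u = 1" using unimodular_mult_cnj[OF u] by (simp_all add: mult.commute)
  have "Hsp \<subseteq> T ` Hsp"
  proof
    fix w assume "w \<in> Hsp"
    then obtain v where "v \<in> Hsp" "R v = (\<lambda>n. cnj u * w n)" using UB_surj[OF assms(2)] by blast
    then show "w \<in> T ` Hsp" using T uu by (force simp: mult.assoc[symmetric])
  qed
  moreover have "T ` Hsp \<subseteq> Hsp" using T UB_Hsp[OF assms(2)] by auto
  moreover have "inj_on T Hsp"
  proof (rule inj_onI)
    fix v w assume vw: "v \<in> Hsp" "w \<in> Hsp" "T v = T w"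
    then have "R v = R w" using T u by (auto simp: fun_eq_iff)
    with vw show "v = w" using UB_inj[OF assms(2)] by blast
  qed
  moreover have "clinear_on Hsp T"
    unfolding clinear_on_def vadd_def vsc_def
    using T UB_add[OF assms(2)] UB_scale[OF assms(2)] by (simp add: distrib_left mult.left_commute)
  moreover have "Bf (T v) (T w) = Bf v w" if "v \<in> Hsp" "w \<in> Hsp" for v w
    using that T UB_Hsp[OF assms(2)] UB_Bf[OF assms(2)] uu by (simp add: mult.assoc[symmetric])
  ultimately show ?thesis unfolding UB_def by blast
qed

lemma proj_eq_comp:
  assumes "proj_eq f f'" "proj_eq g g'" "f \<in> UB" "g' \<in> UB"
  shows "proj_eq (f \<circ> g) (f' \<circ> g')"
proof -
  obtain u where u: "cmod u = 1" "\<And>v. v \<in> Hsp \<Longrightarrow> f v = (\<lambda>n. u * f' v n)"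
    using proj_eqE[OF assms(1)] by blast
  obtain u' where u': "cmod u' = 1" "\<And>v. v \<in> Hsp \<Longrightarrow> g v = (\<lambda>n. u' * g' v n)"
    using proj_eqE[OF assms(2)] by blast
  have "(f \<circ> g) v = vsc (u' * u) ((f' \<circ> g') v)" if v: "v \<in> Hsp" for v
    using u(2)[OF UB_Hsp[OF assms(4) v]] u'(2)[OF v] UB_scale[OF assms(3) UB_Hsp[OF assms(4) v]]
    unfolding vsc_def by (simp add: mult.assoc)
  with u(1) u'(1) show ?thesis unfolding proj_eq_def by (intro exI[of _ "u' * u"]) (simp add: norm_mult)
qed

lemma hdist_scale:
  assumes "x \<in> Hsp" "y \<in> Hsp" "cmod u = 1" "cmod u' = 1"
  shows "hdist (\<lambda>n. u * x n) (\<lambda>n. u' * y n) = hdist x y"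
  using assms unimodular_mult_cnj[OF assms(3)] unimodular_mult_cnj[OF assms(4)]
  unfolding hdist_def by (simp add: norm_mult mult.assoc[symmetric])

lemma fixes_line_proj_eq:
  assumes "proj_eq S T" "v \<in> Hsp" "fixes_line T v" shows "fixes_line S v"
proof -
  obtain u where "\<And>x. x \<in> Hsp \<Longrightarrow> S x = (\<lambda>n. u * T x n)"
    using proj_eqE[OF assms(1)] by blast
  moreover obtain a where "T v = (\<lambda>n. a * v n)" using assms(3) unfolding fixes_line_def vsc_def by blast
  ultimately have "S v = (\<lambda>n. (u * a) * v n)" using assms(2) by (simp add: mult.assoc)
  then show ?thesis unfolding fixes_line_def vsc_def by blast
qed

section \<open>Null frames\<close>

locale null_frame =
  fixes \<eta>1 \<eta>2 :: vec
  assumes eta1_iso: "isotropic \<eta>1" and eta2_iso: "isotropic \<eta>2" and normal: "Bf \<eta>1 \<eta>2 = 1"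
begin

lemma eta1: "\<eta>1 \<in> Hsp" "Bf \<eta>1 \<eta>1 = 0" "\<eta>1 \<noteq> vzero"
  using eta1_iso unfolding isotropic_def by auto

lemma eta2: "\<eta>2 \<in> Hsp" "Bf \<eta>2 \<eta>2 = 0" "\<eta>2 \<noteq> vzero"
  using eta2_iso unfolding isotropic_def by auto

lemma Bf_eta2_eta1: "Bf \<eta>2 \<eta>1 = 1"
  using Bf_cnj[OF eta1(1) eta2(1)] normal by simp

lemma null_frame_swap: "null_frame \<eta>2 \<eta>1"
  by unfold_locales (rule eta2_iso eta1_iso Bf_eta2_eta1)+

lemma Eperp_negative:
  assumes "e \<in> Eperp \<eta>1 \<eta>2"
  shows "Re (Bf e e) \<le> 0" and "Bf e e = 0 \<Longrightarrow> e = vzero"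
proof -
  define p where "p = (\<lambda>n. \<eta>1 n + \<eta>2 n)"
  have e: "e \<in> Hsp" "Bf e \<eta>1 = 0" "Bf e \<eta>2 = 0" using assms unfolding Eperp_def by auto
  have "p \<in> Hsp" "Bf e p = 0" "Bf p p = 2"
    unfolding p_def using e eta1 eta2 normal Bf_eta2_eta1 by simp_all
  then show "Re (Bf e e) \<le> 0" and "Bf e e = 0 \<Longrightarrow> e = vzero"
    using Bf_orthogonal_to_positive[OF e(1)] by simp_all
qed

lemma isotropic_orth_eta1:
  assumes w: "w \<in> Hsp" "Bf w w = 0" "Bf w \<eta>1 = 0"
  shows "w = (\<lambda>n. Bf w \<eta>2 * \<eta>1 n)"
proof -
  define e where "e = (\<lambda>n. w n - Bf w \<eta>2 * \<eta>1 n)"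
  have "Bf \<eta>1 w = 0" using Bf_cnj[OF w(1) eta1(1)] w(3) by simp
  then have "e \<in> Eperp \<eta>1 \<eta>2" "Bf e e = 0"
    unfolding Eperp_def e_def using w eta1 eta2 normal by simp_all
  then have "e = vzero" by (rule Eperp_negative(2))
  then show ?thesis unfolding e_def vzero_def by (simp add: fun_eq_iff)
qed

lemma isotropic_orth_eta2:
  "w \<in> Hsp \<Longrightarrow> Bf w w = 0 \<Longrightarrow> Bf w \<eta>2 = 0 \<Longrightarrow> w = (\<lambda>n. Bf w \<eta>1 * \<eta>2 n)"
  by (rule null_frame.isotropic_orth_eta1[OF null_frame_swap])

lemma diag_eigenvalues_inverse_conj:
  assumes "R \<in> UB" "R \<eta>1 = (\<lambda>n. a * \<eta>1 n)" "R \<eta>2 = (\<lambda>n. a' * \<eta>2 n)"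
  shows "a * cnj a' = 1"
  using UB_Bf[OF assms(1) eta1(1) eta2(1)] assms(2,3) eta1 eta2 normal by simp

lemma isotropic_eigenvector_of_loxodromic:
  assumes R: "R \<in> UB" "R \<eta>1 = (\<lambda>n. a * \<eta>1 n)" "R \<eta>2 = (\<lambda>n. a' * \<eta>2 n)"
    and lox: "cmod a \<noteq> 1"
    and w: "w \<in> Hsp" "Bf w w = 0" and eigen: "R w = (\<lambda>n. \<mu> * w n)"
  shows "w = (\<lambda>n. Bf w \<eta>2 * \<eta>1 n) \<or> w = (\<lambda>n. Bf w \<eta>1 * \<eta>2 n)"
proof (rule ccontr)
  assume "\<not> ?thesis"
  then have "Bf w \<eta>1 \<noteq> 0" "Bf w \<eta>2 \<noteq> 0"
    using isotropic_orth_eta1[OF w] isotropic_orth_eta2[OF w] by auto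
  moreover have "\<mu> * cnj a * Bf w \<eta>1 = Bf w \<eta>1" "\<mu> * cnj a' * Bf w \<eta>2 = Bf w \<eta>2"
    using UB_Bf[OF R(1) w(1) eta1(1)] UB_Bf[OF R(1) w(1) eta2(1)] R(2,3) eigen w(1) eta1 eta2
    by (simp_all add: mult.assoc)
  ultimately have "\<mu> * cnj a = 1" "\<mu> * cnj a' = 1" by simp_all
  then have "a * cnj a = 1" using diag_eigenvalues_inverse_conj[OF R] by (metis mult_cancel_left mult_zero_left zero_neq_one)
  then have "(cmod a)\<^sup>2 = 1" by (metis complex_norm_square of_real_eq_1_iff)
  then have "cmod a = 1" using norm_ge_zero[of a] by (auto simp: power2_eq_1_iff)
  with lox show False ..
qed

lemma frame_coordinates_unique:
  assumes "e \<in> Eperp \<eta>1 \<eta>2" "e' \<in> Eperp \<eta>1 \<eta>2"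
    and eq: "(\<lambda>n. x * \<eta>1 n + y * \<eta>2 n + e n) = (\<lambda>n. x' * \<eta>1 n + y' * \<eta>2 n + e' n)"
  shows "x = x'" "y = y'" "e = e'"
proof -
  have e: "e \<in> Hsp" "Bf e \<eta>1 = 0" "Bf e \<eta>2 = 0" "e' \<in> Hsp" "Bf e' \<eta>1 = 0" "Bf e' \<eta>2 = 0"
    using assms(1,2) unfolding Eperp_def by auto
  show x: "x = x'" using arg_cong[OF eq, of "\<lambda>v. Bf v \<eta>2"] e eta1 eta2 normal by simp
  show y: "y = y'" using arg_cong[OF eq, of "\<lambda>v. Bf v \<eta>1"] e eta1 eta2 Bf_eta2_eta1 by simp
  show "e = e'" using eq unfolding x y by (simp add: fun_eq_iff)
qed

lemma Eperp_scale: "e \<in> Eperp \<eta>1 \<eta>2 \<Longrightarrow> (\<lambda>n. a * e n) \<in> Eperp \<eta>1 \<eta>2"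
  unfolding Eperp_def using eta1(1) eta2(1) by simp

lemma swap_preserves_Eperp:
  assumes S: "S \<in> UB" "S \<eta>1 = (\<lambda>n. N * \<eta>2 n)" "S \<eta>2 = (\<lambda>n. r * \<eta>1 n)"
    and "N \<noteq> 0" "r \<noteq> 0"
  shows "S ` Eperp \<eta>1 \<eta>2 = Eperp \<eta>1 \<eta>2"
proof -
  have "Bf (S x) \<eta>2 = 0 \<longleftrightarrow> Bf x \<eta>1 = 0" "Bf (S x) \<eta>1 = 0 \<longleftrightarrow> Bf x \<eta>2 = 0" if "x \<in> Hsp" for x
    using UB_Bf[OF S(1) that eta1(1)] UB_Bf[OF S(1) that eta2(1)] UB_Hsp[OF S(1) that] S(2,3)
      eta1 eta2 assms(4,5) by auto
  then have "S x \<in> Eperp \<eta>1 \<eta>2 \<longleftrightarrow> x \<in> Eperp \<eta>1 \<eta>2" if "x \<in> Hsp" for x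
    using that UB_Hsp[OF S(1) that] unfolding Eperp_def by blast
  then show ?thesis using UB_surj[OF S(1)] unfolding Eperp_def by blast
qed

end

section \<open>Irreducible representations of \<open>PU(1,1)\<close>\<close>

locale projective_rep =
  fixes \<rho> :: "complex^2^2 \<Rightarrow> vec \<Rightarrow> vec"
  assumes rep: "is_rep \<rho>"
begin

lemma rho_UB: "M \<in> SU11 \<Longrightarrow> \<rho> M \<in> UB"
  using rep unfolding is_rep_def by blast

lemma rho_mult: "M \<in> SU11 \<Longrightarrow> N \<in> SU11 \<Longrightarrow> proj_eq (\<rho> (M ** N)) (\<rho> M \<circ> \<rho> N)"
  using rep unfolding is_rep_def by blast

lemma rho_uminus: "M \<in> SU11 \<Longrightarrow> proj_eq (\<rho> (- M)) (\<rho> M)"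
  using rep unfolding is_rep_def by blast

lemma rho_mult_lifts:
  assumes "M \<in> SU11" "N \<in> SU11" "proj_eq f (\<rho> M)" "proj_eq g (\<rho> N)" "g \<in> UB"
  shows "proj_eq (\<rho> (M ** N)) (f \<circ> g)"
  using proj_eq_trans[OF rho_mult[OF assms(1,2)]
      proj_eq_comp[OF proj_eq_sym[OF assms(3)] proj_eq_sym[OF assms(4)] rho_UB[OF assms(1)] assms(5)]] .

lemma fixes_line_rho_mult:
  assumes "M \<in> SU11" "N \<in> SU11" "v \<in> Hsp" "fixes_line (\<rho> M) v" "fixes_line (\<rho> N) v"
  shows "fixes_line (\<rho> (M ** N)) v"
proof -
  obtain u where "\<And>x. x \<in> Hsp \<Longrightarrow> \<rho> (M ** N) x = (\<lambda>n. u * (\<rho> M \<circ> \<rho> N) x n)"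
    using proj_eqE[OF rho_mult[OF assms(1,2)]] by blast
  moreover obtain a b where "\<rho> M v = (\<lambda>n. a * v n)" "\<rho> N v = (\<lambda>n. b * v n)"
    using assms(4,5) unfolding fixes_line_def vsc_def by blast
  ultimately have "\<rho> (M ** N) v = (\<lambda>n. (u * b * a) * v n)"
    using UB_scale[OF rho_UB[OF assms(1)] assms(3)] assms(3) by (simp add: mult.assoc)
  then show ?thesis unfolding fixes_line_def vsc_def by blast
qed

end

locale irreducible_setting = null_frame \<eta>1 \<eta>2 + projective_rep \<rho>
  for \<eta>1 \<eta>2 :: vec and \<rho> :: "complex^2^2 \<Rightarrow> vec \<Rightarrow> vec" +
  fixes K :: "real \<Rightarrow> complex" and c :: "real \<Rightarrow> vec"
  assumes cont: "orbitally_continuous \<rho>"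
    and irr: "irreducible_rep \<rho>"
    and eta1_fix: "\<forall>l b. l \<noteq> 0 \<longrightarrow> fixes_line (\<rho> (gmat l b)) \<eta>1"
    and eta1_unique: "\<forall>v. isotropic v \<and> (\<forall>l b. l \<noteq> 0 \<longrightarrow> fixes_line (\<rho> (gmat l b)) v)
                           \<longrightarrow> same_line v \<eta>1"
    and eta2_other: "\<not> same_line \<eta>2 \<eta>1"
    and eta2_fix: "\<forall>l. l \<noteq> 0 \<longrightarrow> fixes_line (\<rho> (gmat l 0)) \<eta>2"
    and Kc: "\<forall>b. c b \<in> Eperp \<eta>1 \<eta>2 \<and>
               (\<exists>T. proj_eq T (\<rho> (gmat 1 b)) \<and> T \<eta>1 = \<eta>1 \<and>
                    T \<eta>2 = (\<lambda>n. K b * \<eta>1 n + \<eta>2 n + c b n))"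
begin

definition T_lift :: "real \<Rightarrow> vec \<Rightarrow> vec" where
  "T_lift b = (SOME T. proj_eq T (\<rho> (gmat 1 b)) \<and> T \<eta>1 = \<eta>1 \<and>
                       T \<eta>2 = (\<lambda>n. K b * \<eta>1 n + \<eta>2 n + c b n))"

lemma T_lift:
  "proj_eq (T_lift b) (\<rho> (gmat 1 b))" "T_lift b \<eta>1 = \<eta>1"
  "T_lift b \<eta>2 = (\<lambda>n. K b * \<eta>1 n + \<eta>2 n + c b n)"
proof -
  have "\<exists>T. proj_eq T (\<rho> (gmat 1 b)) \<and> T \<eta>1 = \<eta>1 \<and> T \<eta>2 = (\<lambda>n. K b * \<eta>1 n + \<eta>2 n + c b n)"
    using Kc by blast
  then have "proj_eq (T_lift b) (\<rho> (gmat 1 b)) \<and> T_lift b \<eta>1 = \<eta>1 \<and>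
             T_lift b \<eta>2 = (\<lambda>n. K b * \<eta>1 n + \<eta>2 n + c b n)"
    unfolding T_lift_def by (rule someI_ex)
  then show "proj_eq (T_lift b) (\<rho> (gmat 1 b))" "T_lift b \<eta>1 = \<eta>1"
    "T_lift b \<eta>2 = (\<lambda>n. K b * \<eta>1 n + \<eta>2 n + c b n)" by auto
qed

lemma T_lift_UB: "T_lift b \<in> UB"
  using proj_eq_UB[OF T_lift(1) rho_UB[OF gmat_unipotent_in_SU11]] .

lemma c_Eperp: "c b \<in> Eperp \<eta>1 \<eta>2"
  using Kc by blast

lemma c_orthogonal: "c b \<in> Hsp" "Bf (c b) \<eta>1 = 0" "Bf (c b) \<eta>2 = 0" "Bf \<eta>1 (c b) = 0" "Bf \<eta>2 (c b) = 0"
  using c_Eperp Bf_cnj[of "c b" \<eta>1] Bf_cnj[of "c b" \<eta>2] eta1(1) eta2(1) unfolding Eperp_def by auto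

text \<open>Isotropy of \<open>T_lift b \<eta>2\<close>.\<close>
lemma K_c_isotropic: "K b + cnj (K b) + Bf (c b) (c b) = 0"
proof -
  have "Bf (T_lift b \<eta>2) (T_lift b \<eta>2) = 0" using UB_Bf[OF T_lift_UB eta2(1) eta2(1)] eta2 by simp
  then show ?thesis unfolding T_lift(3) using eta1 eta2 c_orthogonal normal Bf_eta2_eta1 by (simp add: algebra_simps)
qed

lemma Re_K_nonneg: "0 \<le> Re (K b)"
  using arg_cong[OF K_c_isotropic[of b], of Re] Eperp_negative(1)[OF c_Eperp, of b] by simp

lemma c_vanishes_if_K_vanishes: "K b = 0 \<Longrightarrow> c b = vzero"
  using Eperp_negative(2)[OF c_Eperp] K_c_isotropic[of b] by simp

lemma K_vanishes_if_T_lift_fixes_eta2: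
  assumes "T_lift b \<eta>2 = (\<lambda>n. \<mu> * \<eta>2 n)" shows "K b = 0"
  using arg_cong[OF assms, of "\<lambda>v. Bf v \<eta>2"] unfolding T_lift(3) using eta1 eta2 c_orthogonal normal by simp

lemma rho_gmat_eigen:
  assumes "l \<noteq> 0"
  obtains a a' where "\<rho> (gmat l 0) \<eta>1 = (\<lambda>n. a * \<eta>1 n)" "\<rho> (gmat l 0) \<eta>2 = (\<lambda>n. a' * \<eta>2 n)"
    "a * cnj a' = 1"
proof -
  obtain a a' where "\<rho> (gmat l 0) \<eta>1 = (\<lambda>n. a * \<eta>1 n)" "\<rho> (gmat l 0) \<eta>2 = (\<lambda>n. a' * \<eta>2 n)"
    using eta1_fix eta2_fix assms unfolding fixes_line_def vsc_def by blast
  with diag_eigenvalues_inverse_conj[OF rho_UB[OF gmat_in_SU11[OF assms]]] that show ?thesis by blast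
qed

lemma K_dilation:
  assumes l: "l \<noteq> 0" and a: "\<rho> (gmat l 0) \<eta>1 = (\<lambda>n. a * \<eta>1 n)"
    and a': "\<rho> (gmat l 0) \<eta>2 = (\<lambda>n. a' * \<eta>2 n)"
  shows "a' * K (l\<^sup>2 * b) = a * K b"
proof -
  define R where "R = \<rho> (gmat l 0)"
  define b' where "b' = l\<^sup>2 * b"
  have R: "R \<in> UB" unfolding R_def using rho_UB[OF gmat_in_SU11[OF l]] .
  have P: "proj_eq (\<rho> (gmat 1 b' ** gmat l 0)) (R \<circ> T_lift b)"
    unfolding R_def b'_def gmat_diag_unipotent_commute[OF l, symmetric]
    by (rule rho_mult_lifts[OF gmat_in_SU11[OF l] gmat_unipotent_in_SU11 proj_eq_refl T_lift(1) T_lift_UB])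
  have Q: "proj_eq (\<rho> (gmat 1 b' ** gmat l 0)) (T_lift b' \<circ> R)"
    unfolding R_def
    by (rule rho_mult_lifts[OF gmat_unipotent_in_SU11 gmat_in_SU11[OF l] T_lift(1) proj_eq_refl R[unfolded R_def]])
  obtain u where u: "\<And>v. v \<in> Hsp \<Longrightarrow> (R \<circ> T_lift b) v = (\<lambda>n. u * (T_lift b' \<circ> R) v n)"
    using proj_eqE[OF proj_eq_trans[OF proj_eq_sym[OF P] Q]] by blast
  have "a \<noteq> 0" using UB_nonzero[OF R eta1(1,3)] a unfolding R_def vzero_def by auto
  moreover have "(\<lambda>n. a * \<eta>1 n) = (\<lambda>n. (u * a) * \<eta>1 n)"
    using u[OF eta1(1)] T_lift(2) UB_scale[OF T_lift_UB eta1(1)] a unfolding R_def by (simp add: mult.assoc)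
  ultimately have u1: "u = 1" using scale_cancel[OF eta1(3)] by force
  have "a' \<noteq> 0" using diag_eigenvalues_inverse_conj[OF R[unfolded R_def] a a'] by auto
  moreover have "Bf (R (c b)) (R \<eta>2) = 0" using UB_Bf[OF R c_orthogonal(1) eta2(1)] c_orthogonal by simp
  ultimately have Rc: "Bf (R (c b)) \<eta>2 = 0" using a' UB_Hsp[OF R c_orthogonal(1)] eta2 unfolding R_def by simp
  have "R (T_lift b \<eta>2) = (\<lambda>n. K b * (a * \<eta>1 n) + a' * \<eta>2 n + R (c b) n)"
    unfolding T_lift(3) using UB_add[OF R] UB_scale[OF R] eta1 eta2 c_orthogonal a a' unfolding R_def by simp
  moreover have "T_lift b' (R \<eta>2) = (\<lambda>n. a' * (K b' * \<eta>1 n + \<eta>2 n + c b' n))"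
    using a' UB_scale[OF T_lift_UB eta2(1)] T_lift(3) unfolding R_def by simp
  ultimately have "(\<lambda>n. K b * (a * \<eta>1 n) + a' * \<eta>2 n + R (c b) n) = (\<lambda>n. a' * (K b' * \<eta>1 n + \<eta>2 n + c b' n))"
    using u[OF eta2(1)] u1 by simp
  from arg_cong[OF this, of "\<lambda>v. Bf v \<eta>2"] have "K b * a = a' * K b'"
    using eta1 eta2 UB_Hsp[OF R c_orthogonal(1)] c_orthogonal Rc normal by (simp add: mult.assoc)
  then show ?thesis unfolding b'_def by (simp add: mult.commute)
qed

definition axis_point :: vec where
  "axis_point = (\<lambda>n. \<eta>1 n + \<eta>2 n)"

lemma axis_point: "axis_point \<in> Hsp" "Bf axis_point axis_point = 2" "pos_vec axis_point"
  unfolding axis_point_def pos_vec_def using eta1 eta2 normal Bf_eta2_eta1 by simp_all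

lemma hdist_T_lift_axis_point:
  "hdist (T_lift b axis_point) axis_point = arcosh (cmod (2 + K b) / 2)"
proof -
  have "T_lift b axis_point = (\<lambda>n. \<eta>1 n + (K b * \<eta>1 n + \<eta>2 n + c b n))"
    unfolding axis_point_def using UB_add[OF T_lift_UB eta1(1) eta2(1)] T_lift(2,3) by simp
  then have "Bf (T_lift b axis_point) axis_point = 2 + K b"
    unfolding axis_point_def using eta1 eta2 normal Bf_eta2_eta1 c_orthogonal by simp
  moreover have "Bf (T_lift b axis_point) (T_lift b axis_point) = 2"
    using UB_Bf[OF T_lift_UB axis_point(1) axis_point(1)] axis_point(2) by simp
  moreover have "sqrt (2 * 2) = (2::real)" by simp
  ultimately show ?thesis unfolding hdist_def axis_point(2) by simp
qed

lemma K_zero: "K 0 = 0" "c 0 = vzero"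
proof -
  have "fixes_line (T_lift 0) \<eta>2"
    using fixes_line_proj_eq[OF T_lift(1) eta2(1)] eta2_fix by simp
  then show "K 0 = 0" using K_vanishes_if_T_lift_fixes_eta2 unfolding fixes_line_def vsc_def by blast
  then show "c 0 = vzero" by (rule c_vanishes_if_K_vanishes)
qed

lemma hdist_rho_unipotent_axis_point:
  "hdist (\<rho> (gmat 1 b) axis_point) (\<rho> (gmat 1 0) axis_point) = arcosh (cmod (2 + K b) / 2)"
proof -
  have "T_lift 0 axis_point = axis_point"
    unfolding axis_point_def using UB_add[OF T_lift_UB eta1(1) eta2(1)] T_lift(2,3) K_zero
    by (simp add: vzero_def)
  moreover obtain u where "cmod u = 1" "\<rho> (gmat 1 b) axis_point = (\<lambda>n. u * T_lift b axis_point n)"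
    using proj_eqE[OF proj_eq_sym[OF T_lift(1)[of b]]] axis_point(1) by blast
  moreover obtain u' where "cmod u' = 1" "\<rho> (gmat 1 0) axis_point = (\<lambda>n. u' * T_lift 0 axis_point n)"
    using proj_eqE[OF proj_eq_sym[OF T_lift(1)[of 0]]] axis_point(1) by blast
  ultimately show ?thesis
    using hdist_scale[OF UB_Hsp[OF T_lift_UB axis_point(1)] axis_point(1)] hdist_T_lift_axis_point by simp
qed

text \<open>Proof by contradiction that some diagonal element is loxodromic.\<close>

context
  assumes elliptic: "\<And>l a. l \<noteq> 0 \<Longrightarrow> \<rho> (gmat l 0) \<eta>1 = (\<lambda>n. a * \<eta>1 n) \<Longrightarrow> cmod a = 1"
begin

lemma K_dilation_invariant:
  assumes l: "l \<noteq> 0" shows "K (l\<^sup>2 * b) = K b"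
proof -
  obtain a a' where a: "\<rho> (gmat l 0) \<eta>1 = (\<lambda>n. a * \<eta>1 n)" "\<rho> (gmat l 0) \<eta>2 = (\<lambda>n. a' * \<eta>2 n)"
    and aa': "a * cnj a' = 1"
    using rho_gmat_eigen[OF l] by blast
  have "a * cnj a = 1" using unimodular_mult_cnj elliptic[OF l a(1)] by blast
  with aa' have "a' = a" "a \<noteq> 0" by (metis complex_cnj_cnj mult_cancel_left mult_zero_left zero_neq_one)+
  with K_dilation[OF l a] show ?thesis by simp
qed

lemma K_bounded: "cmod (2 + K b) \<le> 2"
proof (rule ccontr)
  define \<epsilon> where "\<epsilon> = arcosh (cmod (2 + K b) / 2)"
  assume "\<not> ?thesis"
  then have "\<epsilon> > 0" unfolding \<epsilon>_def by simp
  then obtain \<delta> where "\<delta> > 0" and \<delta>: "\<And>M. M \<in> SU11 \<Longrightarrow> dist M (gmat 1 0) < \<delta> \<Longrightarrow>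
      hdist (\<rho> M axis_point) (\<rho> (gmat 1 0) axis_point) < \<epsilon>"
    using cont axis_point(3) gmat_unipotent_in_SU11 unfolding orbitally_continuous_def by blast
  have "\<forall>\<^sub>F t in at_right 0. 0 < t \<and> dist (gmat 1 (t * b)) (gmat 1 0) < \<delta>"
    using eventually_conj[OF eventually_at_right_less tendstoD[OF gmat_unipotent_tendsto \<open>\<delta> > 0\<close>]] .
  then obtain t where "0 < t" and "dist (gmat 1 (t * b)) (gmat 1 0) < \<delta>"
    using eventually_happens'[OF trivial_limit_at_right_real] by blast
  then have "arcosh (cmod (2 + K (t * b)) / 2) < \<epsilon>"
    using \<delta>[OF gmat_unipotent_in_SU11] hdist_rho_unipotent_axis_point by simp
  moreover have "K (t * b) = K b"
    using K_dilation_invariant[of "sqrt t" b] \<open>0 < t\<close> by simp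
  ultimately show False unfolding \<epsilon>_def by simp
qed

lemma K_vanishes: "K b = 0"
proof -
  have "(cmod (2 + K b))\<^sup>2 \<le> 2\<^sup>2" using power_mono[OF K_bounded[of b] norm_ge_zero] .
  then have "(2 + Re (K b))\<^sup>2 + (Im (K b))\<^sup>2 \<le> 4" unfolding cmod_power2 by simp
  then have "4 * Re (K b) + (Re (K b))\<^sup>2 + (Im (K b))\<^sup>2 \<le> 0"
    by (simp add: power2_eq_square algebra_simps)
  with Re_K_nonneg[of b] have "Re (K b) = 0" "(Im (K b))\<^sup>2 = 0"
    using zero_le_power2[of "Re (K b)"] zero_le_power2[of "Im (K b)"] by linarith+
  then show ?thesis by (simp add: complex_eq_iff)
qed

lemma elliptic_contradiction: False
proof -
  have "fixes_line (\<rho> (gmat 1 b)) \<eta>2" for b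
  proof -
    have "T_lift b \<eta>2 = \<eta>2"
      using T_lift(3) K_vanishes c_vanishes_if_K_vanishes[OF K_vanishes] by (simp add: vzero_def)
    then have "fixes_line (T_lift b) \<eta>2" unfolding fixes_line_def vsc_def by (metis mult_1)
    then show ?thesis using fixes_line_proj_eq[OF proj_eq_sym[OF T_lift(1)] eta2(1)] by blast
  qed
  then have "fixes_line (\<rho> (gmat 1 (b * l) ** gmat l 0)) \<eta>2" if "l \<noteq> 0" for l b
    using fixes_line_rho_mult[OF gmat_unipotent_in_SU11 gmat_in_SU11[OF that] eta2(1)] eta2_fix that
    by blast
  then have "fixes_line (\<rho> (gmat l b)) \<eta>2" if "l \<noteq> 0" for l b
    using that by (simp only: gmat_factor[OF that, of b])
  then have "same_line \<eta>2 \<eta>1" using eta1_unique eta2_iso by blast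
  with eta2_other show False ..
qed

end

lemma exists_loxodromic_diag:
  "\<exists>l a. l \<noteq> 0 \<and> \<rho> (gmat l 0) \<eta>1 = (\<lambda>n. a * \<eta>1 n) \<and> cmod a \<noteq> 1"
  using elliptic_contradiction by blast

lemma smat_UB: "\<rho> smat \<in> UB"
  by (rule rho_UB[OF smat_in_SU11])

lemma smat_maps_diag_fixed_line:
  assumes l: "l \<noteq> 0" and v: "v \<in> Hsp" "fixes_line (\<rho> (gmat (1 / l) 0)) v"
  shows "fixes_line (\<rho> (gmat l 0)) (\<rho> smat v)"
proof -
  have l': "1 / l \<noteq> 0" using l by simp
  obtain u where u: "cmod u = 1"
    "\<And>x. x \<in> Hsp \<Longrightarrow> (\<rho> smat \<circ> \<rho> (gmat (1 / l) 0)) x = (\<lambda>n. u * (\<rho> (gmat l 0) \<circ> \<rho> smat) x n)"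
    using proj_eqE[OF proj_eq_trans[OF
          proj_eq_sym[OF rho_mult[OF smat_in_SU11 gmat_in_SU11[of "1 / l" 0, OF l'], unfolded smat_gmat_diag[OF l]]]
          rho_mult[OF gmat_in_SU11[of l 0, OF l] smat_in_SU11]]]
    by blast
  obtain \<beta> where "\<rho> (gmat (1 / l) 0) v = (\<lambda>n. \<beta> * v n)" using v(2) unfolding fixes_line_def vsc_def by blast
  then have "(\<lambda>n. \<beta> * \<rho> smat v n) = (\<lambda>n. u * \<rho> (gmat l 0) (\<rho> smat v) n)"
    using u(2)[OF v(1)] UB_scale[OF smat_UB v(1)] by simp
  then have "\<rho> (gmat l 0) (\<rho> smat v) = (\<lambda>n. (\<beta> / u) * \<rho> smat v n)"
    using u(1) by (auto simp: fun_eq_iff field_simps dest: spec)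
  then show ?thesis unfolding fixes_line_def vsc_def by blast
qed

lemma smat_moves_eta1: "\<not> fixes_line (\<rho> smat) \<eta>1"
proof
  assume smat: "fixes_line (\<rho> smat) \<eta>1"
  have "fixes_line (\<rho> M) \<eta>1" if "M \<in> SU11" for M
    using SU11_bruhat[OF that]
  proof (elim disjE exE conjE)
    fix l b assume "l \<noteq> 0" "M = gmat l b"
    then show ?thesis using eta1_fix by blast
  next
    fix l b1 b2 assume l: "l \<noteq> 0" and M: "M = gmat l b1 ** smat ** gmat 1 b2"
    have "fixes_line (\<rho> (gmat l b1 ** smat)) \<eta>1"
      using fixes_line_rho_mult[OF gmat_in_SU11[OF l] smat_in_SU11 eta1(1)] eta1_fix l smat by blast
    then show ?thesis unfolding M
      using fixes_line_rho_mult[OF SU11_mult[OF gmat_in_SU11[OF l] smat_in_SU11] gmat_unipotent_in_SU11 eta1(1)]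
        eta1_fix by simp
  qed
  then have "\<exists>v. v \<in> Hsp \<and> v \<noteq> vzero \<and> Re (Bf v v) \<ge> 0 \<and> (\<forall>M\<in>SU11. fixes_line (\<rho> M) v)"
    using eta1 by auto
  with irr show False unfolding irreducible_rep_def by blast
qed

text \<open>\<open>\<rho> smat\<close> maps the isotropic lines fixed by the loxodromic \<open>\<rho> (gmat (1/l) 0)\<close>, i.e. those
  of \<open>\<eta>1\<close> and \<open>\<eta>2\<close>, to those fixed by \<open>\<rho> (gmat l 0)\<close>.\<close>

lemma smat_swaps_frame:
  obtains \<alpha> \<beta> where "\<rho> smat \<eta>1 = (\<lambda>n. \<alpha> * \<eta>2 n)" "\<rho> smat \<eta>2 = (\<lambda>n. \<beta> * \<eta>1 n)"
    "\<alpha> * cnj \<beta> = 1"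
proof -
  obtain l a0 where l: "l \<noteq> 0" and a0: "\<rho> (gmat l 0) \<eta>1 = (\<lambda>n. a0 * \<eta>1 n)" "cmod a0 \<noteq> 1"
    using exists_loxodromic_diag by blast
  obtain a a' where a: "\<rho> (gmat l 0) \<eta>1 = (\<lambda>n. a * \<eta>1 n)" "\<rho> (gmat l 0) \<eta>2 = (\<lambda>n. a' * \<eta>2 n)"
    using rho_gmat_eigen[OF l] by blast
  have "cmod a \<noteq> 1" using scale_cancel[OF eta1(3)] a0 a(1) by force
  have on_axis: "\<rho> smat v = (\<lambda>n. Bf (\<rho> smat v) \<eta>2 * \<eta>1 n) \<or> \<rho> smat v = (\<lambda>n. Bf (\<rho> smat v) \<eta>1 * \<eta>2 n)"
    if "v \<in> Hsp" "Bf v v = 0" "fixes_line (\<rho> (gmat (1 / l) 0)) v" for v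
    using smat_maps_diag_fixed_line[OF l that(1,3)] UB_Hsp[OF smat_UB that(1)] UB_Bf[OF smat_UB that(1,1)] that(2)
      isotropic_eigenvector_of_loxodromic[OF rho_UB[OF gmat_in_SU11[OF l]] a \<open>cmod a \<noteq> 1\<close>]
    unfolding fixes_line_def vsc_def by metis
  have l': "1 / l \<noteq> 0" using l by simp
  define \<alpha> \<beta> where "\<alpha> = Bf (\<rho> smat \<eta>1) \<eta>1" and "\<beta> = Bf (\<rho> smat \<eta>2) \<eta>2"
  have S1: "\<rho> smat \<eta>1 = (\<lambda>n. \<alpha> * \<eta>2 n)"
    using on_axis[OF eta1(1,2)] eta1_fix l' smat_moves_eta1 unfolding \<alpha>_def fixes_line_def vsc_def by metis
  have B12: "Bf (\<rho> smat \<eta>1) (\<rho> smat \<eta>2) = 1" using UB_Bf[OF smat_UB eta1(1) eta2(1)] normal by simp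
  have S2: "\<rho> smat \<eta>2 = (\<lambda>n. \<beta> * \<eta>1 n)"
  proof -
    have "\<rho> smat \<eta>2 \<noteq> (\<lambda>n. y * \<eta>2 n)" for y
      using B12 eta2 unfolding S1 by auto
    then show ?thesis using on_axis[OF eta2(1,2)] eta2_fix l' unfolding \<beta>_def by blast
  qed
  from B12 have "\<alpha> * cnj \<beta> = 1" unfolding S1 S2 using eta1 eta2 Bf_eta2_eta1 by simp
  with S1 S2 that show ?thesis by blast
qed

lemma smat_normalized_lift:
  obtains \<nu> :: real and S where "\<nu> > 0" "proj_eq S (\<rho> smat)"
    "S \<eta>1 = (\<lambda>n. complex_of_real \<nu> * \<eta>2 n)" "S \<eta>2 = (\<lambda>n. complex_of_real (1 / \<nu>) * \<eta>1 n)"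
proof -
  obtain \<alpha> \<beta> where S: "\<rho> smat \<eta>1 = (\<lambda>n. \<alpha> * \<eta>2 n)" "\<rho> smat \<eta>2 = (\<lambda>n. \<beta> * \<eta>1 n)"
    and \<alpha>\<beta>: "\<alpha> * cnj \<beta> = 1"
    by (rule smat_swaps_frame)
  define \<nu> where "\<nu> = cmod \<alpha>"
  define u where "u = cnj \<alpha> / \<nu>"
  have "\<alpha> \<noteq> 0" using \<alpha>\<beta> by auto
  then have "\<nu> > 0" "cmod u = 1" unfolding \<nu>_def u_def by (simp_all add: norm_divide)
  have "u * \<alpha> = \<nu>" unfolding u_def \<nu>_def using \<open>\<alpha> \<noteq> 0\<close>
    by (simp add: complex_norm_square[symmetric] power2_eq_square field_simps flip: of_real_mult)
  moreover have "u * \<beta> = 1 / \<nu>" unfolding u_def using arg_cong[OF \<alpha>\<beta>, of cnj] by simp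
  moreover have "proj_eq (\<lambda>x n. u * \<rho> smat x n) (\<rho> smat)"
    unfolding proj_eq_def vsc_def using \<open>cmod u = 1\<close> by blast
  ultimately show ?thesis using that[OF \<open>\<nu> > 0\<close>] S by (simp add: mult.assoc[symmetric])
qed

lemma smat_unipotent_smat:
  assumes b: "b \<noteq> 0" and S: "proj_eq S (\<rho> smat)"
  obtains u where "\<And>y. y \<in> Hsp \<Longrightarrow> ((S \<circ> T_lift b) \<circ> S) y =
    (\<lambda>n. u * (((T_lift (-1/b) \<circ> \<rho> (gmat (1/b) 0)) \<circ> S) \<circ> T_lift (-1/b)) y n)"
proof -
  define x where "x = -1/b"
  have g: "gmat (1/b) 0 \<in> SU11" using b by (simp add: gmat_in_SU11)
  have S_UB: "S \<in> UB" using proj_eq_UB[OF S smat_UB] .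
  have su: "smat ** gmat 1 b \<in> SU11" "gmat 1 x ** gmat (1/b) 0 \<in> SU11"
    "gmat 1 x ** gmat (1/b) 0 ** smat \<in> SU11" "gmat 1 x ** gmat (1/b) 0 ** smat ** gmat 1 x \<in> SU11"
    using g by (simp_all add: SU11_mult smat_in_SU11 gmat_unipotent_in_SU11)
  have "proj_eq (\<rho> (smat ** gmat 1 b)) (S \<circ> T_lift b)"
    by (rule rho_mult_lifts[OF smat_in_SU11 gmat_unipotent_in_SU11 S T_lift(1) T_lift_UB])
  from rho_mult_lifts[OF su(1) smat_in_SU11 proj_eq_sym[OF this] S S_UB]
  have P: "proj_eq (\<rho> (smat ** gmat 1 b ** smat)) ((S \<circ> T_lift b) \<circ> S)" .
  have "proj_eq (\<rho> (gmat 1 x ** gmat (1/b) 0)) (T_lift x \<circ> \<rho> (gmat (1/b) 0))"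
    by (rule rho_mult_lifts[OF gmat_unipotent_in_SU11 g T_lift(1) proj_eq_refl rho_UB[OF g]])
  from rho_mult_lifts[OF su(2) smat_in_SU11 proj_eq_sym[OF this] S S_UB]
  have "proj_eq (\<rho> (gmat 1 x ** gmat (1/b) 0 ** smat)) ((T_lift x \<circ> \<rho> (gmat (1/b) 0)) \<circ> S)" .
  from rho_mult_lifts[OF su(3) gmat_unipotent_in_SU11 proj_eq_sym[OF this] T_lift(1) T_lift_UB]
  have "proj_eq (\<rho> (gmat 1 x ** gmat (1/b) 0 ** smat ** gmat 1 x))
      (((T_lift x \<circ> \<rho> (gmat (1/b) 0)) \<circ> S) \<circ> T_lift x)" .
  from proj_eq_trans[OF rho_uminus[OF su(4)] this]
  have "proj_eq (\<rho> (smat ** gmat 1 b ** smat)) (((T_lift x \<circ> \<rho> (gmat (1/b) 0)) \<circ> S) \<circ> T_lift x)"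
    unfolding smat_gmat_smat[OF b, folded x_def] .
  from proj_eqE[OF proj_eq_trans[OF proj_eq_sym[OF P] this]] that show ?thesis
    unfolding x_def by blast
qed

text \<open>Evaluate both sides of \<open>smat_unipotent_smat\<close> on \<open>\<eta>1\<close> and compare the
  \<open>E\<close>-components.\<close>

lemma smat_lift_on_c:
  assumes "\<nu> > 0" and S: "proj_eq S (\<rho> smat)" "S \<eta>1 = (\<lambda>n. complex_of_real \<nu> * \<eta>2 n)"
    "S \<eta>2 = (\<lambda>n. complex_of_real (1 / \<nu>) * \<eta>1 n)"
    and b: "b \<noteq> 0"
  shows "S (c b) = (\<lambda>n. (complex_of_real \<nu> * K b) * c (-1/b) n)"
proof -
  define x N where "x = -1/b" and "N = complex_of_real \<nu>"
  have N: "N \<noteq> 0" unfolding N_def using \<open>\<nu> > 0\<close> by simp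
  have S_UB: "S \<in> UB" using proj_eq_UB[OF S(1) smat_UB] .
  have "S (c b) \<in> Eperp \<eta>1 \<eta>2"
    using swap_preserves_Eperp[OF S_UB S(2,3)] c_Eperp \<open>\<nu> > 0\<close> by auto
  obtain u where u: "\<And>y. y \<in> Hsp \<Longrightarrow> ((S \<circ> T_lift b) \<circ> S) y =
    (\<lambda>n. u * (((T_lift x \<circ> \<rho> (gmat (1/b) 0)) \<circ> S) \<circ> T_lift x) y n)"
    using smat_unipotent_smat[OF b S(1)] unfolding x_def by blast
  obtain a where a: "\<rho> (gmat (1/b) 0) \<eta>2 = (\<lambda>n. a * \<eta>2 n)"
    using eta2_fix b unfolding fixes_line_def vsc_def by force
  have "T_lift b (S \<eta>1) = (\<lambda>n. N * (K b * \<eta>1 n + \<eta>2 n + c b n))"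
    using S(2) UB_scale[OF T_lift_UB eta2(1)] T_lift(3) unfolding N_def by simp
  then have "((S \<circ> T_lift b) \<circ> S) \<eta>1 = (\<lambda>n. N * (K b * S \<eta>1 n + S \<eta>2 n + S (c b) n))"
    using UB_add[OF S_UB] UB_scale[OF S_UB] eta1 eta2 c_orthogonal by simp
  also have "\<dots> = (\<lambda>n. (N / \<nu>) * \<eta>1 n + (N * N * K b) * \<eta>2 n + N * S (c b) n)"
    unfolding S(2,3) N_def by (simp add: algebra_simps)
  finally have lhs: "((S \<circ> T_lift b) \<circ> S) \<eta>1 = \<dots>" .
  have "(((T_lift x \<circ> \<rho> (gmat (1/b) 0)) \<circ> S) \<circ> T_lift x) \<eta>1 = (\<lambda>n. (N * a) * T_lift x \<eta>2 n)"
    using S(2) a T_lift(2) UB_scale[OF rho_UB[OF gmat_in_SU11] eta2(1)] UB_scale[OF T_lift_UB eta2(1)] b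
    unfolding N_def by (simp flip: mult.assoc)
  then have rhs: "(\<lambda>n. u * (((T_lift x \<circ> \<rho> (gmat (1/b) 0)) \<circ> S) \<circ> T_lift x) \<eta>1 n) =
      (\<lambda>n. (u * N * a * K x) * \<eta>1 n + (u * N * a) * \<eta>2 n + (u * N * a) * c x n)"
    unfolding T_lift(3) by (simp add: algebra_simps)
  have "(\<lambda>n. (N / \<nu>) * \<eta>1 n + (N * N * K b) * \<eta>2 n + N * S (c b) n) =
        (\<lambda>n. (u * N * a * K x) * \<eta>1 n + (u * N * a) * \<eta>2 n + (u * N * a) * c x n)"
    using u[OF eta1(1)] lhs rhs by simp
  from frame_coordinates_unique(2,3)[OF Eperp_scale Eperp_scale, OF \<open>S (c b) \<in> Eperp \<eta>1 \<eta>2\<close> c_Eperp this]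
  have "N * N * K b = u * N * a" "(\<lambda>n. N * S (c b) n) = (\<lambda>n. (u * N * a) * c x n)" .
  then show ?thesis using N unfolding x_def N_def by (simp add: fun_eq_iff)
qed

end

theorem mainTheorem9:
  fixes \<rho> :: "complex^2^2 \<Rightarrow> vec \<Rightarrow> vec"
    and \<eta>1 \<eta>2 :: vec
    and K :: "real \<Rightarrow> complex"
    and c :: "real \<Rightarrow> vec"
  assumes rep: "is_rep \<rho>"
    and cont: "orbitally_continuous \<rho>"
    and irr: "irreducible_rep \<rho>"
    and eta1_iso: "isotropic \<eta>1"
    and eta1_fix: "\<forall>l b. l \<noteq> 0 \<longrightarrow> fixes_line (\<rho> (gmat l b)) \<eta>1"
    and eta1_unique: "\<forall>v. isotropic v \<and> (\<forall>l b. l \<noteq> 0 \<longrightarrow> fixes_line (\<rho> (gmat l b)) v)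
                           \<longrightarrow> same_line v \<eta>1"
    and eta2_iso: "isotropic \<eta>2"
    and eta2_other: "\<not> same_line \<eta>2 \<eta>1"
    and eta2_fix: "\<forall>l. l \<noteq> 0 \<longrightarrow> fixes_line (\<rho> (gmat l 0)) \<eta>2"
    and normal: "Bf \<eta>1 \<eta>2 = 1"
    and Kc: "\<forall>b. c b \<in> Eperp \<eta>1 \<eta>2 \<and>
               (\<exists>T. proj_eq T (\<rho> (gmat 1 b)) \<and> T \<eta>1 = \<eta>1 \<and>
                    T \<eta>2 = (\<lambda>n. K b * \<eta>1 n + \<eta>2 n + c b n))"
  shows "\<exists>\<nu>::real. \<nu> > 0 \<and> (\<exists>S A.
           proj_eq S (\<rho> smat) \<and>
           S \<eta>1 = vsc (complex_of_real \<nu>) \<eta>2 \<and>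
           S \<eta>2 = vsc (complex_of_real (1 / \<nu>)) \<eta>1 \<and>
           (\<forall>v\<in>Eperp \<eta>1 \<eta>2. S v = A v) \<and>
           A ` Eperp \<eta>1 \<eta>2 = Eperp \<eta>1 \<eta>2 \<and> inj_on A (Eperp \<eta>1 \<eta>2) \<and>
           clinear_on (Eperp \<eta>1 \<eta>2) A \<and>
           (\<forall>v\<in>Eperp \<eta>1 \<eta>2. \<forall>w\<in>Eperp \<eta>1 \<eta>2. Bf (A v) (A w) = Bf v w) \<and>
           (\<forall>b. b \<noteq> 0 \<longrightarrow> A (c b) = vsc (complex_of_real \<nu> * K b) (c (- 1 / b))))"
proof -
  interpret irreducible_setting \<eta>1 \<eta>2 \<rho> K c
    by unfold_locales (fact assms)+
  obtain \<nu> S where \<nu>: "\<nu> > 0" and S: "proj_eq S (\<rho> smat)"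
    "S \<eta>1 = (\<lambda>n. complex_of_real \<nu> * \<eta>2 n)" "S \<eta>2 = (\<lambda>n. complex_of_real (1 / \<nu>) * \<eta>1 n)"
    by (rule smat_normalized_lift)
  have S_UB: "S \<in> UB" using proj_eq_UB[OF S(1) smat_UB] .
  have "Eperp \<eta>1 \<eta>2 \<subseteq> Hsp" unfolding Eperp_def by auto
  note UB_restrict[OF S_UB this]
  moreover have "S ` Eperp \<eta>1 \<eta>2 = Eperp \<eta>1 \<eta>2"
    using swap_preserves_Eperp[OF S_UB S(2,3)] \<nu> by simp
  moreover have "S (c b) = vsc (complex_of_real \<nu> * K b) (c (- 1 / b))" if "b \<noteq> 0" for b
    using smat_lift_on_c[OF \<nu> S that] unfolding vsc_def by simp
  ultimately show ?thesis
    using \<nu> S unfolding vsc_def by (intro exI[of _ \<nu>] exI[of _ S] conjI) auto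
qed

end
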